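(* Let $\Omega\subset\mathbb{R}^{2n}$ be a centrally symmetric convex body with $c^{\mathrm{lin}}_{\min}(\Omega)\ge\pi$, and let $(\ell,\ell')$ be a pair of transverse Lagrangian planes, with $\Pi_\ell$ the projection onto $\ell$ along $\ell'$ and $\Pi_{\ell'}$ the projection onto $\ell'$ along $\ell$. Then $(\Pi_\ell\Omega)^o_{\ell'}\subset\Pi_{\ell'}\Omega$, i.e. $(\Pi_\ell\Omega,\Pi_{\ell'}\Omega)$ is a Lagrangian polar dual pair.
   Context: Write $z=(x,p)\in\mathbb{R}^{2n}$, $\omega((x,p),(x',p'))=p\cdot x'-p'\cdot x$. $\mathrm{Sp}(n)$ is the group of linear automorphisms preserving $\omega$. $c^{\mathrm{lin}}_{\min}(\Omega)=\sup\{\pi R^2: S(B^{2n}(z_0,R))\subset\Omega,\ S\in\mathrm{Sp}(n),\ z_0\in\mathbb{R}^{2n}\}$ where $B^{2n}(z_0,R)$ is the closed Euclidean ball of radius $R$ centered at $z_0$. A Lagrangian plane is an $n$-dimensional subspace on which $\omega$ vanishes; $\ell,\ell'$ are transverse if $\ell\cap\ell'=0$. For a centrally symmetric convex body $X_\ell\subset\ell$, its Lagrangian polar dual in $\ell'$ is $X^o_{\ell'}=\{z'\in\ell':\omega(z,z')\le1\ \forall z\in X_\ell\}$; $(X_\ell,Y_{\ell'})$ is a Lagrangian polar dual pair if $X^o_{\ell'}\subset Y_{\ell'}$. *)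

theory Defs
  imports "HOL-Analysis.Analysis"
begin

text \<open>Phase space R^{2n} is modelled as (real^'n) \<times> (real^'n), z = (x,p);
  the product norm is the Euclidean norm on R^{2n}.\<close>

definition omega :: "((real^'n) \<times> (real^'n)) \<Rightarrow> ((real^'n) \<times> (real^'n)) \<Rightarrow> real" where
  "omega z z' = snd z \<bullet> fst z' - snd z' \<bullet> fst z"

definition symplectic :: "(((real^'n) \<times> (real^'n)) \<Rightarrow> ((real^'n) \<times> (real^'n))) \<Rightarrow> bool" where
  "symplectic S \<longleftrightarrow> linear S \<and> bij S \<and> (\<forall>z w. omega (S z) (S w) = omega z w)"

definition c_lin_min :: "((real^'n) \<times> (real^'n)) set \<Rightarrow> real" where
  "c_lin_min \<Omega> = Sup {pi * R^2 | R. \<exists>S z0. R > 0 \<and> symplectic S \<and> S ` cball z0 R \<subseteq> \<Omega>}"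

definition convex_body :: "'a::euclidean_space set \<Rightarrow> bool" where
  "convex_body K \<longleftrightarrow> compact K \<and> convex K \<and> interior K \<noteq> {}"

definition centrally_symmetric :: "'a::real_vector set \<Rightarrow> bool" where
  "centrally_symmetric K \<longleftrightarrow> (\<forall>z\<in>K. - z \<in> K)"

definition lagrangian_plane :: "((real^'n) \<times> (real^'n)) set \<Rightarrow> bool" where
  "lagrangian_plane L \<longleftrightarrow> subspace L \<and> dim L = CARD('n) \<and> (\<forall>z\<in>L. \<forall>w\<in>L. omega z w = 0)"

definition transverse :: "'a::real_vector set \<Rightarrow> 'a set \<Rightarrow> bool" where
  "transverse L L' \<longleftrightarrow> L \<inter> L' = {0}"

definition proj_along :: "'a::real_vector set \<Rightarrow> 'a set \<Rightarrow> 'a \<Rightarrow> 'a" where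
  "proj_along L L' z = (THE u. u \<in> L \<and> z - u \<in> L')"

definition lag_polar :: "((real^'n) \<times> (real^'n)) set \<Rightarrow> ((real^'n) \<times> (real^'n)) set \<Rightarrow> ((real^'n) \<times> (real^'n)) set" where
  "lag_polar X L' = {z' \<in> L'. \<forall>z\<in>X. omega z z' \<le> 1}"

end

theory Submission
  imports Defs
begin

text \<open>The symplectic polar {z'. \<forall>z\<in>\<Omega>. \<omega>(z,z') \<le> 1} of \<Omega> is \<open>lag_polar \<Omega> UNIV\<close>.
  If a symplectic ball S(B(0,R)) lies in \<Omega>, testing z' = S y against S(R J y / |y|), where
  J(x,p) = (-p,x) satisfies \<omega>(J y, y) = |y|^2, gives |y| \<le> 1/R, so R^2 z' lies in S(B(0,R)) and
  hence in \<Omega>.  As the linear capacity of \<Omega> is at least \<pi>, R^2 can be taken arbitrarily close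
  to 1, so the symplectic polar of \<Omega> is contained in \<Omega>.  On the other hand, L' is isotropic,
  so \<omega>(z,z') = \<omega>(\<Pi> z, z') for z' \<in> L', where \<Pi> projects onto L along L'.  Hence the
  Lagrangian polar of \<Pi> \<Omega> is the part of the symplectic polar of \<Omega> in L', and the projection
  onto L' along L fixes it.\<close>

lemma proj_along_eqI:
  assumes "subspace L" "subspace L'" "transverse L L'" "u \<in> L" "z - u \<in> L'"
  shows "proj_along L L' z = u"
  unfolding proj_along_def
proof (rule the_equality)
  fix v assume v: "v \<in> L \<and> z - v \<in> L'"
  have "v - u \<in> L" using assms(1,4) v by (simp add: subspace_diff)
  moreover have "v - u \<in> L'" using subspace_diff[OF assms(2,5), of "z - v"] v by simp
  ultimately have "v - u \<in> L \<inter> L'" by simp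
  then show "v = u" using assms(3) unfolding transverse_def by simp
qed (use assms in simp)

lemma proj_along_self:
  assumes "subspace L" "subspace L'" "transverse L L'" "z \<in> L"
  shows "proj_along L L' z = z"
  using assms by (intro proj_along_eqI) (auto simp: subspace_0)

lemma transverse_lagrangian_planes_decompose:
  fixes L L' :: "((real^'n) \<times> (real^'n)) set"
  assumes "lagrangian_plane L" "lagrangian_plane L'" "transverse L L'"
  obtains u where "u \<in> L" "z - u \<in> L'"
proof -
  have sL: "subspace L" and sL': "subspace L'"
    using assms(1,2) unfolding lagrangian_plane_def by auto
  define T where "T = {x + y |x y. x \<in> L \<and> y \<in> L'}"
  have "dim T + dim (L \<inter> L') = dim L + dim L'"
    unfolding T_def by (rule dim_sums_Int[OF sL sL'])
  then have "dim T = DIM((real^'n) \<times> (real^'n))"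
    using assms unfolding lagrangian_plane_def transverse_def by simp
  then have "span T = UNIV" by (rule dim_eq_full[THEN iffD1])
  moreover have "subspace T" unfolding T_def by (rule subspace_sums[OF sL sL'])
  ultimately have "z \<in> T" by (metis UNIV_I span_eq_iff)
  then obtain x y where "z = x + y" "x \<in> L" "y \<in> L'" unfolding T_def by blast
  then show thesis by (intro that[of x]) auto
qed

lemma proj_along_lagrangian:
  fixes L L' :: "((real^'n) \<times> (real^'n)) set"
  assumes "lagrangian_plane L" "lagrangian_plane L'" "transverse L L'"
  shows "proj_along L L' z \<in> L" "z - proj_along L L' z \<in> L'"
proof -
  obtain u where u: "u \<in> L" "z - u \<in> L'"
    using transverse_lagrangian_planes_decompose[OF assms] .
  have "proj_along L L' z = u"
    using assms u unfolding lagrangian_plane_def by (intro proj_along_eqI) auto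
  with u show "proj_along L L' z \<in> L" "z - proj_along L L' z \<in> L'" by simp_all
qed

lemma omega_diff_left: "omega (z - w) z' = omega z z' - omega w z'"
  unfolding omega_def by (simp add: inner_diff_left inner_diff_right)

lemma omega_scaleR_left: "omega (c *\<^sub>R z) z' = c * omega z z'"
  unfolding omega_def by (simp add: algebra_simps)

lemma omega_rotation_self: "omega (- snd y, fst y) y = (norm y)\<^sup>2"
  by (cases y) (simp add: omega_def power2_norm_eq_inner inner_Pair inner_commute)

lemma lag_polar_proj_subset:
  fixes \<Omega> L L' :: "((real^'n) \<times> (real^'n)) set"
  assumes "lagrangian_plane L" "lagrangian_plane L'" "transverse L L'"
  shows "lag_polar (proj_along L L' ` \<Omega>) L' \<subseteq> lag_polar \<Omega> UNIV \<inter> L'"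
proof (clarsimp simp: lag_polar_def)
  fix z' w assume z': "z' \<in> L'" "\<forall>z\<in>\<Omega>. omega (proj_along L L' z) z' \<le> 1" and w: "w \<in> \<Omega>"
  have "omega (w - proj_along L L' w) z' = 0"
    using assms(2) z'(1) proj_along_lagrangian(2)[OF assms] unfolding lagrangian_plane_def by blast
  then show "omega w z' \<le> 1" using z'(2) w by (simp add: omega_diff_left)
qed

lemma symmetric_convex_zero:
  assumes "convex K" "centrally_symmetric K" "K \<noteq> {}"
  shows "0 \<in> K"
proof -
  obtain w where "w \<in> K" using assms(3) by blast
  then have "(1/2) *\<^sub>R w + (1/2) *\<^sub>R (- w) \<in> K"
    using assms(1,2) unfolding centrally_symmetric_def by (intro convexD) auto
  then show ?thesis by simp
qed

text \<open>Averaging S(z0 + v) with -S(z0 - v) recentres a linear image of a ball at the origin.\<close>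
lemma symmetric_convex_linear_image_cball_centred:
  assumes "convex K" "centrally_symmetric K" "linear S" "S ` cball z0 R \<subseteq> K"
    and "norm v \<le> R"
  shows "S v \<in> K"
proof -
  have "z0 + v \<in> cball z0 R" "z0 - v \<in> cball z0 R" using assms(5) by (simp_all add: dist_norm)
  then have "S (z0 + v) \<in> K" "- S (z0 - v) \<in> K"
    using assms(2,4) unfolding centrally_symmetric_def by blast+
  then have "(1/2) *\<^sub>R S (z0 + v) + (1/2) *\<^sub>R (- S (z0 - v)) \<in> K"
    using assms(1) by (intro convexD) auto
  moreover have "S (z0 + v) = S z0 + S v" "S (z0 - v) = S z0 - S v"
    using assms(3) by (simp_all add: linear_add linear_diff)
  then have "(1/2) *\<^sub>R S (z0 + v) + (1/2) *\<^sub>R (- S (z0 - v)) = S v"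
    by (simp only:) (simp add: algebra_simps flip: scaleR_add_left)
  ultimately show ?thesis by simp
qed

lemma symplectic_ball_scales_polar:
  fixes \<Omega> :: "((real^'n) \<times> (real^'n)) set"
  assumes S: "symplectic S" and R: "R > 0"
    and ball: "\<And>v. norm v \<le> R \<Longrightarrow> S v \<in> \<Omega>"
    and z': "z' \<in> lag_polar \<Omega> UNIV"
  shows "R\<^sup>2 *\<^sub>R z' \<in> \<Omega>"
proof -
  have lin: "linear S" and om: "\<And>a b. omega (S a) (S b) = omega a b"
    using S unfolding symplectic_def by auto
  obtain y where y: "S y = z'" using S unfolding symplectic_def bij_def surj_def by metis
  have "R * norm y \<le> 1"
  proof (cases "y = 0")
    case False
    define v where "v = (R / norm y) *\<^sub>R (- snd y, fst y)"
    have "norm (- snd y, fst y) = norm y" by (simp add: norm_Pair add.commute norm_prod_def)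
    then have "norm v = R" using False R unfolding v_def by (simp only: norm_scaleR) simp
    then have "omega (S v) z' \<le> 1" using ball z' unfolding lag_polar_def by blast
    moreover have "omega v y = R / norm y * (norm y)\<^sup>2"
      by (simp only: v_def omega_scaleR_left omega_rotation_self)
    ultimately show ?thesis using om[of v y] y False by (simp add: power2_eq_square)
  qed simp
  then have "norm (R\<^sup>2 *\<^sub>R y) \<le> R"
    using R mult_left_mono[of "R * norm y" 1 R] by (simp add: power2_eq_square)
  then show ?thesis using ball y linear_scale[OF lin] by metis
qed

lemma c_lin_min_gt_imp_symplectic_ball:
  fixes \<Omega> :: "((real^'n) \<times> (real^'n)) set"
  assumes "interior \<Omega> \<noteq> {}" "c < c_lin_min \<Omega>"
  obtains R S z0 where "R > 0" "c < pi * R\<^sup>2" "symplectic S" "S ` cball z0 R \<subseteq> \<Omega>"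
proof -
  define X where "X = {pi * R^2 | R. \<exists>S z0. R > 0 \<and> symplectic S \<and> S ` cball z0 R \<subseteq> \<Omega>}"
  obtain z0 e where e: "e > 0" "ball z0 e \<subseteq> \<Omega>" using assms(1) by (metis all_not_in_conv mem_interior)
  have "cball z0 (e/2) \<subseteq> \<Omega>" using e cball_subset_ball_iff[of z0 "e/2" z0 e] by auto
  moreover have "symplectic id" unfolding symplectic_def by (auto simp: linear_id)
  ultimately have "\<exists>S z1. e/2 > 0 \<and> symplectic S \<and> S ` cball z1 (e/2) \<subseteq> \<Omega>"
    using e(1) by (intro exI[of _ id] exI[of _ z0]) auto
  then have "pi * (e/2)\<^sup>2 \<in> X" unfolding X_def by blast
  then obtain x where "x \<in> X" "c < x"
    using less_cSupD[of X c] assms(2) unfolding c_lin_min_def X_def by blast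
  then show thesis unfolding X_def using that by blast
qed

lemma closed_scaleR_limit:
  fixes z :: "'a::real_normed_vector"
  assumes "closed K" "\<And>r. 0 < r \<Longrightarrow> r < 1 \<Longrightarrow> r *\<^sub>R z \<in> K"
  shows "z \<in> K"
proof -
  have "((\<lambda>r. r *\<^sub>R z) \<longlongrightarrow> 1 *\<^sub>R z) (at_left 1)"
    by (intro tendsto_scaleR tendsto_ident_at tendsto_const)
  moreover have "\<forall>\<^sub>F r in at_left (1::real). r *\<^sub>R z \<in> K"
    using eventually_at_left_real[of 0 "1::real"] assms(2) by (auto elim: eventually_mono)
  ultimately show ?thesis using assms(1) by (simp add: Lim_in_closed_set)
qed

lemma symplectic_polar_subset_of_capacity:
  fixes \<Omega> :: "((real^'n) \<times> (real^'n)) set"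
  assumes body: "convex_body \<Omega>" and sym: "centrally_symmetric \<Omega>" and cap: "c_lin_min \<Omega> \<ge> pi"
  shows "lag_polar \<Omega> UNIV \<subseteq> \<Omega>"
proof
  fix z' assume z': "z' \<in> lag_polar \<Omega> UNIV"
  have cvx: "convex \<Omega>" and int: "interior \<Omega> \<noteq> {}" and "closed \<Omega>"
    using body unfolding convex_body_def by (auto intro: compact_imp_closed)
  have zero: "0 \<in> \<Omega>" using symmetric_convex_zero[OF cvx sym] int interior_subset by blast
  show "z' \<in> \<Omega>"
  proof (rule closed_scaleR_limit[OF \<open>closed \<Omega>\<close>])
    fix r :: real assume r: "0 < r" "r < 1"
    then have "pi * r < pi" by simp
    then have "pi * r < c_lin_min \<Omega>" using cap by linarith
    then obtain R S z0 where R: "R > 0" "pi * r < pi * R\<^sup>2" "symplectic S" "S ` cball z0 R \<subseteq> \<Omega>"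
      using c_lin_min_gt_imp_symplectic_ball[OF int] by blast
    have "R\<^sup>2 *\<^sub>R z' \<in> \<Omega>"
      using R(1,3) z' symmetric_convex_linear_image_cball_centred[OF cvx sym _ R(4)]
      by (intro symplectic_ball_scales_polar) (auto simp: symplectic_def)
    moreover have "0 \<le> r / R\<^sup>2" "r / R\<^sup>2 \<le> 1" using r R(1,2) by simp_all
    ultimately have "(r / R\<^sup>2) *\<^sub>R (R\<^sup>2 *\<^sub>R z') + (1 - r / R\<^sup>2) *\<^sub>R 0 \<in> \<Omega>"
      using cvx zero by (intro convexD) auto
    then show "r *\<^sub>R z' \<in> \<Omega>" using R(1) by simp
  qed
qed

theorem mainTheorem10:
  fixes \<Omega> L L' :: "((real^'n) \<times> (real^'n)) set"
  assumes "convex_body \<Omega>" and "centrally_symmetric \<Omega>"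
    and "c_lin_min \<Omega> \<ge> pi"
    and "lagrangian_plane L" and "lagrangian_plane L'" and "transverse L L'"
  shows "lag_polar (proj_along L L' ` \<Omega>) L' \<subseteq> proj_along L' L ` \<Omega>"
proof
  fix z' assume "z' \<in> lag_polar (proj_along L L' ` \<Omega>) L'"
  then have z': "z' \<in> \<Omega>" "z' \<in> L'"
    using lag_polar_proj_subset[OF assms(4-6)] symplectic_polar_subset_of_capacity[OF assms(1-3)]
    by blast+
  have "proj_along L' L z' = z'"
    using assms(4-6) z'(2)
    by (intro proj_along_self) (auto simp: lagrangian_plane_def transverse_def)
  with z'(1) show "z' \<in> proj_along L' L ` \<Omega>" by (metis image_eqI)
qed

end
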